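(* Let $\{X,X_n;\,n\ge1\}$ be i.i.d. random variables with values in a real separable Banach space $\mathbf{B}$ and let $p>0$. Then for any $s>0$, $$\limsup_{n\to\infty}\frac1{\log n}\log\mathbb{P}\Big(\max_{1\le k\le n}\|X_k\|>sn^{1/p}\Big)=\min\Big\{0,\,-\frac{\bar\beta-p}{p}\Big\}$$ and $$\liminf_{n\to\infty}\frac1{\log n}\log\mathbb{P}\Big(\max_{1\le k\le n}\|X_k\|>sn^{1/p}\Big)=\min\Big\{0,\,-\frac{\underline\beta-p}{p}\Big\}.$$
   Context: $\bar\beta=-\limsup_{t\to\infty}\frac1t\log\mathbb{P}(\log\|X\|>t)$, $\underline\beta=-\liminf_{t\to\infty}\frac1t\log\mathbb{P}(\log\|X\|>t)$, both in $[0,\infty]$. Conventions: $\log0=-\infty$; $(\pm\infty+y)/x=\pm\infty$ for $x\in(0,\infty)$, $y\in\mathbb{R}$. *)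

theory Defs
  imports "HOL-Probability.Probability"
begin

definition elog :: "real \<Rightarrow> ereal" where
  "elog x = (if x = 0 then -\<infinity> else ereal (ln x))"

definition beta_bar :: "'a measure \<Rightarrow> ('a \<Rightarrow> 'b::real_normed_vector) \<Rightarrow> ereal" where
  "beta_bar M X = - Limsup at_top
     (\<lambda>t::real. elog (measure M {\<omega> \<in> space M. elog (norm (X \<omega>)) > ereal t}) / ereal t)"

definition beta_under :: "'a measure \<Rightarrow> ('a \<Rightarrow> 'b::real_normed_vector) \<Rightarrow> ereal" where
  "beta_under M X = - Liminf at_top
     (\<lambda>t::real. elog (measure M {\<omega> \<in> space M. elog (norm (X \<omega>)) > ereal t}) / ereal t)"

end

theory Submission
  imports Defs "HOL-Real_Asymp.Real_Asymp"
begin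

text \<open>
  Write \<open>G c = P(\<parallel>X\<parallel> > c)\<close> and \<open>c\<^sub>n = s n powr (1 / p)\<close>. By independence the probability in question is
  \<open>1 - (1 - G c\<^sub>n)\<^sup>n\<close>, which lies between \<open>min 1 (n G c\<^sub>n) / 2\<close> and \<open>min 1 (n G c\<^sub>n)\<close>;
  hence its logarithm divided by \<open>log n\<close> is \<open>min 0 (1 + log G c\<^sub>n / log n)\<close> up to an error
  \<open>O(1 / log n)\<close>. Since \<open>log c\<^sub>n \<sim> log n / p\<close>, it remains to compare the upper and lower limits
  of \<open>log G(e\<^sup>t) / t\<close> along the sample points \<open>t = log c\<^sub>n\<close> with those over all real \<open>t\<close>.
  They agree because \<open>G\<close> is monotone and consecutive sample points have ratio tending to 1.
\<close>

lemma elog_eq_ln: "x > 0 \<Longrightarrow> elog x = ereal (ln x)"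
  by (simp add: elog_def)

lemma elog_mono: "0 \<le> x \<Longrightarrow> x \<le> y \<Longrightarrow> elog x \<le> elog y"
  by (auto simp: elog_def)

lemma elog_nonpos: "0 \<le> x \<Longrightarrow> x \<le> 1 \<Longrightarrow> elog x \<le> 0"
  by (auto simp: elog_def)

lemma ereal_less_elog_iff:
  assumes "0 \<le> x" shows "ereal t < elog x \<longleftrightarrow> exp t < x"
proof (cases "x = 0")
  case False
  then have "exp t < x \<longleftrightarrow> exp t < exp (ln x)" using assms by simp
  then show ?thesis using False by (simp add: elog_def)
qed (simp add: elog_def)

lemma Limsup_compose_filterlim_le:
  fixes f :: "'a \<Rightarrow> 'b::complete_lattice"
  assumes "filterlim g G F"
  shows "Limsup F (\<lambda>x. f (g x)) \<le> Limsup G f"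
proof -
  have "Limsup F (\<lambda>x. f (g x)) \<le> Limsup (filtermap g F) f"
    by (rule Limsup_filtermap_ge)
  also have "\<dots> \<le> Limsup G f"
    using assms unfolding Limsup_def filterlim_def
    by (intro INF_superset_mono) (auto simp: le_filter_def)
  finally show ?thesis .
qed

lemma Liminf_compose_filterlim_ge:
  fixes f :: "'a \<Rightarrow> 'b::complete_lattice"
  assumes "filterlim g G F"
  shows "Liminf G f \<le> Liminf F (\<lambda>x. f (g x))"
proof -
  have "Liminf G f \<le> Liminf (filtermap g F) f"
    using assms unfolding Liminf_def filterlim_def
    by (intro SUP_subset_mono) (auto simp: le_filter_def)
  also have "\<dots> \<le> Liminf F (\<lambda>x. f (g x))"
    by (rule Liminf_filtermap_le)
  finally show ?thesis .
qed

lemma ereal_divide_eq_ratio_times: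
  fixes x :: ereal and a b :: real
  assumes "a > 0" "b > 0"
  shows "x / ereal a = ereal (b / a) * (x / ereal b)"
  using assms by (cases x) (auto simp: field_simps)

lemma ereal_divide_nonpos_mono:
  fixes x y :: ereal and a b :: real
  assumes "x \<le> y" "y \<le> 0" "0 < a" "a \<le> b"
  shows "x / ereal a \<le> y / ereal b"
proof (cases x; cases y)
  fix r r' assume xy: "x = ereal r" "y = ereal r'"
  have "r / a \<le> r' / a" using assms xy by (simp add: divide_right_mono)
  also have "\<dots> \<le> r' / b" using assms xy by (simp add: divide_left_mono_neg)
  finally show ?thesis using xy assms by simp
qed (use assms in auto)

text \<open>
  The map \<open>\<nu>\<close> locates a real \<open>t\<close> between
  two consecutive sample points; monotonicity of \<open>\<phi>\<close> then bounds \<open>\<phi> t / t\<close> on both sides by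
  sampled values, distorted only by the ratio of consecutive sample points.
\<close>

context
  fixes \<phi> :: "real \<Rightarrow> ereal" and T :: "nat \<Rightarrow> real" and \<nu> :: "real \<Rightarrow> nat"
  assumes antitone: "\<And>x y. x \<le> y \<Longrightarrow> \<phi> y \<le> \<phi> x"
    and nonpos: "\<And>x. \<phi> x \<le> 0"
    and T_lim: "filterlim T at_top sequentially"
    and T_ratio: "(\<lambda>n. T (Suc n) / T n) \<longlonglongrightarrow> 1"
    and \<nu>_lim: "filterlim \<nu> sequentially at_top"
    and bracket: "\<forall>\<^sub>F t in at_top. T (\<nu> t) \<le> t \<and> t \<le> T (Suc (\<nu> t))"
begin

private lemma eventually_T_pos: "\<forall>\<^sub>F n in sequentially. T n > 0 \<and> T (Suc n) > 0"
proof -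
  have pos: "\<forall>\<^sub>F n in sequentially. T n > 0"
    using T_lim by (simp add: filterlim_at_top_dense)
  show ?thesis
    using pos pos[folded eventually_sequentially_Suc[of "\<lambda>n. T n > 0"]] by eventually_elim simp
qed

private lemma eventually_bracket_pos: "\<forall>\<^sub>F t in at_top. 0 < T (\<nu> t) \<and> T (\<nu> t) \<le> t \<and> t \<le> T (Suc (\<nu> t))"
proof -
  have "\<forall>\<^sub>F t in at_top. T (\<nu> t) > 0"
    using filterlim_compose[OF T_lim \<nu>_lim] by (simp add: filterlim_at_top_dense)
  with bracket show ?thesis by eventually_elim simp
qed

lemma Limsup_divide_eq_limsup_sampled:
  "Limsup at_top (\<lambda>t. \<phi> t / ereal t) = limsup (\<lambda>n. \<phi> (T n) / ereal (T n))"
proof (rule antisym)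
  define w where "w n = \<phi> (T n) / ereal (T (Suc n))" for n
  have "(\<lambda>n. inverse (T (Suc n) / T n)) \<longlonglongrightarrow> inverse 1"
    by (intro tendsto_inverse T_ratio) simp
  then have ratio: "(\<lambda>n. ereal (T n / T (Suc n))) \<longlonglongrightarrow> 1"
    unfolding one_ereal_def by (intro tendsto_ereal) simp
  have "\<forall>\<^sub>F n in sequentially. w n = ereal (T n / T (Suc n)) * (\<phi> (T n) / ereal (T n))"
    using eventually_T_pos by eventually_elim (simp add: w_def ereal_divide_eq_ratio_times)
  then have "limsup w = limsup (\<lambda>n. ereal (T n / T (Suc n)) * (\<phi> (T n) / ereal (T n)))"
    by (rule Limsup_eq)
  also have "\<dots> = limsup (\<lambda>n. \<phi> (T n) / ereal (T n))"
    using ereal_limsup_lim_mult[OF ratio] by simp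
  finally have limsup_w: "limsup w = limsup (\<lambda>n. \<phi> (T n) / ereal (T n))" .
  have "\<forall>\<^sub>F t in at_top. \<phi> t / ereal t \<le> w (\<nu> t)"
    using eventually_bracket_pos
  proof eventually_elim
    case (elim t)
    then show ?case
      unfolding w_def by (intro ereal_divide_nonpos_mono antitone nonpos) auto
  qed
  then have "Limsup at_top (\<lambda>t. \<phi> t / ereal t) \<le> Limsup at_top (\<lambda>t. w (\<nu> t))"
    by (rule Limsup_mono)
  also have "\<dots> \<le> limsup w"
    by (rule Limsup_compose_filterlim_le[OF \<nu>_lim])
  finally show "Limsup at_top (\<lambda>t. \<phi> t / ereal t) \<le> limsup (\<lambda>n. \<phi> (T n) / ereal (T n))"
    using limsup_w by simp
  show "limsup (\<lambda>n. \<phi> (T n) / ereal (T n)) \<le> Limsup at_top (\<lambda>t. \<phi> t / ereal t)"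
    by (rule Limsup_compose_filterlim_le[OF T_lim])
qed

lemma Liminf_divide_eq_liminf_sampled:
  "Liminf at_top (\<lambda>t. \<phi> t / ereal t) = liminf (\<lambda>n. \<phi> (T n) / ereal (T n))"
proof (rule antisym)
  show "Liminf at_top (\<lambda>t. \<phi> t / ereal t) \<le> liminf (\<lambda>n. \<phi> (T n) / ereal (T n))"
    by (rule Liminf_compose_filterlim_ge[OF T_lim])
  define w where "w n = \<phi> (T (Suc n)) / ereal (T n)" for n
  have ratio: "(\<lambda>n. ereal (T (Suc n) / T n)) \<longlonglongrightarrow> 1"
    unfolding one_ereal_def by (intro tendsto_ereal T_ratio)
  have "\<forall>\<^sub>F n in sequentially.
      w n = ereal (T (Suc n) / T n) * (\<phi> (T (n + 1)) / ereal (T (n + 1)))"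
    using eventually_T_pos by eventually_elim (simp add: w_def ereal_divide_eq_ratio_times)
  then have "liminf w = liminf (\<lambda>n. ereal (T (Suc n) / T n) * (\<phi> (T (n + 1)) / ereal (T (n + 1))))"
    by (rule Liminf_eq)
  also have "\<dots> = liminf (\<lambda>n. \<phi> (T (n + 1)) / ereal (T (n + 1)))"
    using ereal_liminf_lim_mult[OF ratio] by simp
  also have "\<dots> = liminf (\<lambda>n. \<phi> (T n) / ereal (T n))"
    by (rule liminf_shift)
  finally have liminf_w: "liminf w = liminf (\<lambda>n. \<phi> (T n) / ereal (T n))" .
  have "\<forall>\<^sub>F t in at_top. w (\<nu> t) \<le> \<phi> t / ereal t"
    using eventually_bracket_pos
  proof eventually_elim
    case (elim t)
    then show ?case
      unfolding w_def by (intro ereal_divide_nonpos_mono antitone nonpos) auto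
  qed
  then have "Liminf at_top (\<lambda>t. w (\<nu> t)) \<le> Liminf at_top (\<lambda>t. \<phi> t / ereal t)"
    by (rule Liminf_mono)
  moreover have "liminf w \<le> Liminf at_top (\<lambda>t. w (\<nu> t))"
    by (rule Liminf_compose_filterlim_ge[OF \<nu>_lim])
  ultimately show "liminf (\<lambda>n. \<phi> (T n) / ereal (T n)) \<le> Liminf at_top (\<lambda>t. \<phi> t / ereal t)"
    using liminf_w by simp
qed

end

lemma ln_sampling_bracket:
  fixes p c :: real
  assumes "p > 0"
  shows "filterlim (\<lambda>t. nat \<lfloor>exp (p * (t - c))\<rfloor>) sequentially at_top"
    and "\<forall>\<^sub>F t in at_top. let n = nat \<lfloor>exp (p * (t - c))\<rfloor> in
           c + ln (real n) / p \<le> t \<and> t \<le> c + ln (real (Suc n)) / p"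
proof -
  show lim: "filterlim (\<lambda>t. nat \<lfloor>exp (p * (t - c))\<rfloor>) sequentially at_top"
    by (intro filterlim_compose[OF filterlim_nat_sequentially]
          filterlim_compose[OF filterlim_floor_sequentially]) (use assms in real_asymp)
  show "\<forall>\<^sub>F t in at_top. let n = nat \<lfloor>exp (p * (t - c))\<rfloor> in
           c + ln (real n) / p \<le> t \<and> t \<le> c + ln (real (Suc n)) / p"
    using lim[unfolded filterlim_at_top, rule_format, of 1]
  proof eventually_elim
    case (elim t)
    define e where "e = exp (p * (t - c))"
    define n where "n = nat \<lfloor>e\<rfloor>"
    have n_le: "real n \<le> e" and less_n: "e < real (Suc n)"
      using elim by (auto simp: n_def e_def) linarith+
    have "n \<ge> 1"
      using elim unfolding n_def e_def .
    then have "ln (real n) \<le> ln e"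
      using n_le by (intro ln_mono) auto
    moreover have "ln e < ln (real (Suc n))"
      using less_n by (intro ln_less_cancel_iff[THEN iffD2]) (auto simp: e_def)
    ultimately have "ln (real n) \<le> p * (t - c)" and "p * (t - c) < ln (real (Suc n))"
      by (simp_all add: e_def)
    then show ?case
      using assms by (simp add: Let_def n_def e_def field_simps)
  qed
qed

lemma ln_sampled_limsup_liminf:
  fixes \<phi> :: "real \<Rightarrow> ereal" and p c :: real
  assumes antitone: "\<And>x y. x \<le> y \<Longrightarrow> \<phi> y \<le> \<phi> x" and nonpos: "\<And>x. \<phi> x \<le> 0"
    and "p > 0"
  shows "limsup (\<lambda>n. \<phi> (c + ln (real n) / p) / ereal (ln (real n)))
           = ereal (1 / p) * Limsup at_top (\<lambda>t. \<phi> t / ereal t)"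
    and "liminf (\<lambda>n. \<phi> (c + ln (real n) / p) / ereal (ln (real n)))
           = ereal (1 / p) * Liminf at_top (\<lambda>t. \<phi> t / ereal t)"
proof -
  define T where "T n = c + ln (real n) / p" for n
  have T_lim: "filterlim T at_top sequentially"
    unfolding T_def using \<open>p > 0\<close> by real_asymp
  have T_ratio: "(\<lambda>n. T (Suc n) / T n) \<longlonglongrightarrow> 1"
    unfolding T_def using \<open>p > 0\<close> by real_asymp
  note sampling = ln_sampling_bracket[OF \<open>p > 0\<close>, of c, folded T_def, unfolded Let_def]
  have "(\<lambda>n. T n / ln (real n)) \<longlonglongrightarrow> inverse p"
    unfolding T_def using \<open>p > 0\<close> by real_asymp
  then have ratio: "(\<lambda>n. ereal (T n / ln (real n))) \<longlonglongrightarrow> ereal (1 / p)"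
    by (intro tendsto_ereal) (simp add: inverse_eq_divide)
  have p': "ereal (1 / p) > 0" "ereal (1 / p) \<noteq> \<infinity>"
    using \<open>p > 0\<close> by auto
  have "\<forall>\<^sub>F n in sequentially. T n > 0"
    using T_lim by (simp add: filterlim_at_top_dense)
  then have eq: "\<forall>\<^sub>F n in sequentially.
      \<phi> (T n) / ereal (ln (real n)) = ereal (T n / ln (real n)) * (\<phi> (T n) / ereal (T n))"
    using eventually_ge_at_top[of 2]
    by eventually_elim (rule ereal_divide_eq_ratio_times, auto)
  have "limsup (\<lambda>n. \<phi> (T n) / ereal (ln (real n)))
      = limsup (\<lambda>n. ereal (T n / ln (real n)) * (\<phi> (T n) / ereal (T n)))"
    by (rule Limsup_eq[OF eq])
  also have "\<dots> = ereal (1 / p) * limsup (\<lambda>n. \<phi> (T n) / ereal (T n))"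
    by (rule ereal_limsup_lim_mult[OF ratio p'])
  also have "\<dots> = ereal (1 / p) * Limsup at_top (\<lambda>t. \<phi> t / ereal t)"
    by (simp only: Limsup_divide_eq_limsup_sampled[OF antitone nonpos T_lim T_ratio sampling])
  finally show "limsup (\<lambda>n. \<phi> (c + ln (real n) / p) / ereal (ln (real n)))
           = ereal (1 / p) * Limsup at_top (\<lambda>t. \<phi> t / ereal t)"
    by (simp only: T_def)
  have "liminf (\<lambda>n. \<phi> (T n) / ereal (ln (real n)))
      = liminf (\<lambda>n. ereal (T n / ln (real n)) * (\<phi> (T n) / ereal (T n)))"
    by (rule Liminf_eq[OF eq])
  also have "\<dots> = ereal (1 / p) * liminf (\<lambda>n. \<phi> (T n) / ereal (T n))"
    by (rule ereal_liminf_lim_mult[OF ratio p'])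
  also have "\<dots> = ereal (1 / p) * Liminf at_top (\<lambda>t. \<phi> t / ereal t)"
    by (simp only: Liminf_divide_eq_liminf_sampled[OF antitone nonpos T_lim T_ratio sampling])
  finally show "liminf (\<lambda>n. \<phi> (c + ln (real n) / p) / ereal (ln (real n)))
           = ereal (1 / p) * Liminf at_top (\<lambda>t. \<phi> t / ereal t)"
    by (simp only: T_def)
qed

lemma one_minus_power_bounds:
  fixes g :: real
  assumes "0 \<le> g" "g \<le> 1"
  shows "1 - (1 - g) ^ n \<le> min 1 (real n * g)"
    and "min 1 (real n * g) / 2 \<le> 1 - (1 - g) ^ n"
proof -
  have "1 - real n * g \<le> (1 - g) ^ n"
    using Bernoulli_inequality[of "- g" n] assms by simp
  then show "1 - (1 - g) ^ n \<le> min 1 (real n * g)"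
    using assms by simp
  have "(1 - g) ^ n * (1 + real n * g) \<le> (1 - g) ^ n * (1 + g) ^ n"
    using Bernoulli_inequality[of g n] assms by (intro mult_left_mono) simp_all
  also have "\<dots> = (1 - g\<^sup>2) ^ n"
    by (simp add: power_mult_distrib[symmetric] algebra_simps power2_eq_square)
  also have "\<dots> \<le> 1"
    using assms by (intro power_le_one) (auto simp: power2_eq_square mult_le_one)
  finally have "(1 - g) ^ n * (1 + real n * g) \<le> 1" .
  then have upper: "(1 - g) ^ n \<le> 1 / (1 + real n * g)"
    using assms by (simp add: field_simps add_pos_nonneg)
  have "min 1 x / 2 \<le> 1 - 1 / (1 + x)" if "x \<ge> 0" for x :: real
  proof (cases "x \<le> 1")
    case True
    then have "x * x \<le> x" using that by (simp add: mult_right_le_one_le)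
    then show ?thesis using True that by (auto simp: field_simps)
  qed (use that in \<open>auto simp: field_simps\<close>)
  from this[of "real n * g"] show "min 1 (real n * g) / 2 \<le> 1 - (1 - g) ^ n"
    using upper assms by simp
qed

lemma elog_divide_ln_bounds:
  fixes a g x :: real
  assumes "x > 1" "0 \<le> g"
    and upper: "a \<le> min 1 (x * g)" and lower: "min 1 (x * g) / 2 \<le> a"
  shows "elog a / ereal (ln x) \<le> min 0 (1 + elog g / ereal (ln x))"
    and "min 0 (1 + elog g / ereal (ln x)) + ereal (- ln 2 / ln x) \<le> elog a / ereal (ln x)"
proof -
  have L: "ln x > 0" using \<open>x > 1\<close> by simp
  have "elog a / ereal (ln x) \<le> min 0 (1 + elog g / ereal (ln x)) \<and>
      min 0 (1 + elog g / ereal (ln x)) + ereal (- ln 2 / ln x) \<le> elog a / ereal (ln x)"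
  proof (cases "g = 0")
    case True
    then have "a = 0" using upper lower by simp
    then show ?thesis using True L by (simp add: elog_def)
  next
    case False
    then have "x * g > 0" using \<open>0 \<le> g\<close> \<open>x > 1\<close> by simp
    then have "min 1 (x * g) / 2 > 0"
      by simp
    then have "a > 0"
      using lower by linarith
    have "ln (min 1 (x * g)) = min 0 (ln (x * g))"
      using \<open>x * g > 0\<close> by (cases "x * g \<le> 1") (auto simp: min_def)
    then have ln_min: "ln (min 1 (x * g)) = min 0 (ln x + ln g)"
      using \<open>x > 1\<close> False \<open>0 \<le> g\<close> by (simp add: ln_mult)
    have ln_upper: "ln a \<le> min 0 (ln x + ln g)"
      using ln_mono[OF upper \<open>a > 0\<close>] ln_min by simp
    have "ln (min 1 (x * g) / 2) \<le> ln a"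
      using lower \<open>x * g > 0\<close> by (intro ln_mono) auto
    moreover have "ln (min 1 (x * g) / 2) = ln (min 1 (x * g)) - ln 2"
      using \<open>x * g > 0\<close> by (intro ln_divide_pos) auto
    ultimately have ln_lower: "min 0 (ln x + ln g) - ln 2 \<le> ln a"
      using ln_min by simp
    have min_div: "min 0 (ln x + ln g) / ln x = min 0 (1 + ln g / ln x)"
      using L by (cases "ln x + ln g \<le> 0")
        (auto simp: min_def field_simps divide_le_0_iff zero_le_divide_iff)
    have "ln a / ln x \<le> min 0 (1 + ln g / ln x)"
      using divide_right_mono[OF ln_upper, of "ln x"] L min_div by simp
    moreover have "min 0 (1 + ln g / ln x) + - ln 2 / ln x \<le> ln a / ln x"
      using divide_right_mono[OF ln_lower, of "ln x"] L min_div by (simp add: diff_divide_distrib)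
    ultimately show ?thesis
      using \<open>a > 0\<close> False \<open>0 \<le> g\<close> L
      by (cases "1 + ln g / ln x \<le> 0") (auto simp: elog_eq_ln min_def)
  qed
  then show "elog a / ereal (ln x) \<le> min 0 (1 + elog g / ereal (ln x))"
    and "min 0 (1 + elog g / ereal (ln x)) + ereal (- ln 2 / ln x) \<le> elog a / ereal (ln x)"
    by auto
qed

lemma limsup_liminf_eq_of_vanishing_gap:
  fixes b m :: "nat \<Rightarrow> ereal" and e :: "nat \<Rightarrow> real"
  assumes "e \<longlonglongrightarrow> 0" and gap: "\<forall>\<^sub>F n in sequentially. b n \<le> m n \<and> m n + ereal (e n) \<le> b n"
  shows "limsup b = limsup m" and "liminf b = liminf m"
proof -
  have e_ereal: "(\<lambda>n. ereal (e n)) \<longlonglongrightarrow> ereal 0" "\<bar>ereal 0\<bar> \<noteq> \<infinity>"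
    using assms(1) by (auto intro: tendsto_ereal)
  have upper: "\<forall>\<^sub>F n in sequentially. b n \<le> m n"
    and lower: "\<forall>\<^sub>F n in sequentially. ereal (e n) + m n \<le> b n"
    using gap by (auto elim: eventually_mono simp: add.commute)
  show "limsup b = limsup m"
  proof (rule antisym)
    show "limsup b \<le> limsup m"
      using upper by (rule Limsup_mono)
    show "limsup m \<le> limsup b"
      using Limsup_mono[OF lower] ereal_limsup_lim_add[OF e_ereal, of m] by simp
  qed
  show "liminf b = liminf m"
  proof (rule antisym)
    show "liminf b \<le> liminf m"
      using upper by (rule Liminf_mono)
    show "liminf m \<le> liminf b"
      using Liminf_mono[OF lower] ereal_liminf_lim_add[OF e_ereal, of m] by simp
  qed
qed

lemma limsup_liminf_min_zero_one_plus:
  fixes q :: "nat \<Rightarrow> ereal"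
  shows "limsup (\<lambda>n. min 0 (1 + q n)) = min 0 (1 + limsup q)"
    and "liminf (\<lambda>n. min 0 (1 + q n)) = min 0 (1 + liminf q)"
proof -
  have cont: "continuous_on UNIV (\<lambda>x::ereal. min 0 x)"
    by (intro continuous_intros)
  have mono: "mono (\<lambda>x::ereal. min 0 x)"
    by (auto simp: mono_def min_le_iff_disj)
  have one: "(\<lambda>n. (1::ereal)) \<longlonglongrightarrow> 1" "\<bar>(1::ereal)\<bar> \<noteq> \<infinity>"
    by auto
  show "limsup (\<lambda>n. min 0 (1 + q n)) = min 0 (1 + limsup q)"
    using Limsup_compose_continuous_mono[OF cont mono, of sequentially "\<lambda>n. 1 + q n"]
      ereal_limsup_lim_add[OF one, of q] by simp
  show "liminf (\<lambda>n. min 0 (1 + q n)) = min 0 (1 + liminf q)"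
    using Liminf_compose_continuous_mono[OF cont mono, of sequentially "\<lambda>n. 1 + q n"]
      ereal_liminf_lim_add[OF one, of q] by simp
qed

lemma log_one_minus_power_tail_limsup_liminf:
  fixes G :: "real \<Rightarrow> real" and p s :: real
  assumes "p > 0" "s > 0"
    and G_antitone: "\<And>x y. x \<le> y \<Longrightarrow> G y \<le> G x" and G_nonneg: "\<And>x. 0 \<le> G x"
    and G_le_1: "\<And>x. G x \<le> 1"
  shows "limsup (\<lambda>n. elog (1 - (1 - G (s * real n powr (1 / p))) ^ n) / ereal (ln (real n)))
           = min 0 (1 + ereal (1 / p) * Limsup at_top (\<lambda>t. elog (G (exp t)) / ereal t))"
    and "liminf (\<lambda>n. elog (1 - (1 - G (s * real n powr (1 / p))) ^ n) / ereal (ln (real n)))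
           = min 0 (1 + ereal (1 / p) * Liminf at_top (\<lambda>t. elog (G (exp t)) / ereal t))"
proof -
  define \<phi> where "\<phi> t = elog (G (exp t))" for t
  define q where "q n = \<phi> (ln s + ln (real n) / p) / ereal (ln (real n))" for n
  have \<phi>_antitone: "\<phi> y \<le> \<phi> x" if "x \<le> y" for x y
    unfolding \<phi>_def using that by (intro elog_mono G_nonneg G_antitone) simp
  have \<phi>_nonpos: "\<phi> x \<le> 0" for x
    unfolding \<phi>_def by (intro elog_nonpos G_nonneg G_le_1)
  have gap: "\<forall>\<^sub>F n in sequentially.
      elog (1 - (1 - G (s * real n powr (1 / p))) ^ n) / ereal (ln (real n)) \<le> min 0 (1 + q n) \<and>
      min 0 (1 + q n) + ereal (- ln 2 / ln (real n))
        \<le> elog (1 - (1 - G (s * real n powr (1 / p))) ^ n) / ereal (ln (real n))"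
    using eventually_ge_at_top[of 2]
  proof eventually_elim
    case (elim n)
    have "exp (ln s + ln (real n) / p) = s * real n powr (1 / p)"
      using elim \<open>s > 0\<close> by (simp add: exp_add powr_def)
    then have "q n = elog (G (s * real n powr (1 / p))) / ereal (ln (real n))"
      by (simp add: q_def \<phi>_def)
    then show ?case
      using elim elog_divide_ln_bounds[OF _ G_nonneg one_minus_power_bounds[OF G_nonneg G_le_1]]
      by simp
  qed
  have "(\<lambda>n. - ln 2 / ln (real n)) \<longlonglongrightarrow> 0"
    by real_asymp
  note sandwich = limsup_liminf_eq_of_vanishing_gap[OF this gap]
  have "limsup q = ereal (1 / p) * Limsup at_top (\<lambda>t. \<phi> t / ereal t)"
    and "liminf q = ereal (1 / p) * Liminf at_top (\<lambda>t. \<phi> t / ereal t)"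
    unfolding q_def using \<phi>_antitone \<phi>_nonpos \<open>p > 0\<close> by (fact ln_sampled_limsup_liminf)+
  then show "limsup (\<lambda>n. elog (1 - (1 - G (s * real n powr (1 / p))) ^ n) / ereal (ln (real n)))
           = min 0 (1 + ereal (1 / p) * Limsup at_top (\<lambda>t. elog (G (exp t)) / ereal t))"
    and "liminf (\<lambda>n. elog (1 - (1 - G (s * real n powr (1 / p))) ^ n) / ereal (ln (real n)))
           = min 0 (1 + ereal (1 / p) * Liminf at_top (\<lambda>t. elog (G (exp t)) / ereal t))"
    by (simp_all add: sandwich limsup_liminf_min_zero_one_plus \<phi>_def)
qed

lemma (in prob_space) prob_Max_norm_greater_iid:
  fixes X :: "'i \<Rightarrow> 'a \<Rightarrow> 'b::real_normed_vector" and Y :: "'a \<Rightarrow> 'b"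
  assumes indep: "indep_vars (\<lambda>_. borel) X I"
    and "J \<subseteq> I" "finite J" "J \<noteq> {}"
    and Y[measurable]: "Y \<in> borel_measurable M"
    and same_distr: "\<And>k. k \<in> J \<Longrightarrow> distr M borel (X k) = distr M borel Y"
  shows "prob {\<omega> \<in> space M. c < (MAX k\<in>J. norm (X k \<omega>))}
           = 1 - (1 - prob {\<omega> \<in> space M. c < norm (Y \<omega>)}) ^ card J"
proof -
  define E where "E k = {\<omega> \<in> space M. c < norm (X k \<omega>)}" for k
  have X[measurable]: "X k \<in> borel_measurable M" if "k \<in> J" for k
    using indep \<open>J \<subseteq> I\<close> that by (auto simp: indep_vars_def)
  have E_sets: "E k \<in> events" if "k \<in> J" for k
    unfolding E_def using that by measurable
  have prob_E: "prob (E k) = prob {\<omega> \<in> space M. c < norm (Y \<omega>)}" if "k \<in> J" for k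
  proof -
    have "{x::'b. c < norm x} \<in> sets borel"
      by measurable
    then have "prob (X k -` {x. c < norm x} \<inter> space M) = prob (Y -` {x. c < norm x} \<inter> space M)"
      using same_distr[OF that] that
      by (metis (no_types, lifting) X Y measure_distr sets_distr)
    then show ?thesis
      unfolding E_def by (simp add: vimage_def Int_def conj_commute)
  qed
  have "indep_events (\<lambda>k. {\<omega> \<in> space M. norm (X k \<omega>) \<le> c}) I"
    by (rule indep_eventsI_indep_vars[OF indep]) measurable
  moreover have "{\<omega> \<in> space M. norm (X k \<omega>) \<le> c} = space M - E k" for k
    by (auto simp: E_def)
  ultimately have indep_compl: "prob (\<Inter>k\<in>J. space M - E k) = (\<Prod>k\<in>J. prob (space M - E k))"
    using assms(2-4) unfolding indep_events_def by simp
  have "{\<omega> \<in> space M. c < (MAX k\<in>J. norm (X k \<omega>))} = (\<Union>k\<in>J. E k)"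
    using \<open>finite J\<close> \<open>J \<noteq> {}\<close> by (auto simp: E_def Max_gr_iff)
  then have "1 - prob {\<omega> \<in> space M. c < (MAX k\<in>J. norm (X k \<omega>))} = prob (space M - (\<Union>k\<in>J. E k))"
    using E_sets \<open>finite J\<close> by (simp add: prob_compl sets.finite_UN)
  also have "\<dots> = prob (\<Inter>k\<in>J. space M - E k)"
    using \<open>J \<noteq> {}\<close> by (intro arg_cong[where f = prob]) auto
  also have "\<dots> = (1 - prob {\<omega> \<in> space M. c < norm (Y \<omega>)}) ^ card J"
    using indep_compl prob_E by (simp add: prob_compl E_sets)
  finally show ?thesis
    by simp
qed

theorem lemma3p4:
  fixes M :: "'a measure"
    and Y :: "'a \<Rightarrow> 'b::{banach, second_countable_topology}"
    and X :: "nat \<Rightarrow> 'a \<Rightarrow> 'b"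
    and p s :: real
  assumes "prob_space M"
    and "Y \<in> borel_measurable M"
    and "\<And>n. n \<ge> 1 \<Longrightarrow> X n \<in> borel_measurable M"
    and "prob_space.indep_vars M (\<lambda>_. borel) X {1..}"
    and "\<And>n. n \<ge> 1 \<Longrightarrow> distr M borel (X n) = distr M borel Y"
    and "p > 0" and "s > 0"
  shows "(limsup (\<lambda>n. elog (measure M {\<omega> \<in> space M.
              (MAX k\<in>{1..n}. norm (X k \<omega>)) > s * real n powr (1 / p)}) / ereal (ln (real n)))
           = min 0 (- (beta_bar M Y - ereal p) / ereal p))
     \<and> (liminf (\<lambda>n. elog (measure M {\<omega> \<in> space M.
              (MAX k\<in>{1..n}. norm (X k \<omega>)) > s * real n powr (1 / p)}) / ereal (ln (real n)))
           = min 0 (- (beta_under M Y - ereal p) / ereal p))"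
proof -
  interpret prob_space M by fact
  define G where "G c = prob {\<omega> \<in> space M. c < norm (Y \<omega>)}" for c
  have G_antitone: "G y \<le> G x" if "x \<le> y" for x y
    unfolding G_def using that assms(2) by (intro finite_measure_mono) auto
  have G_bounds: "0 \<le> G x" "G x \<le> 1" for x
    by (simp_all add: G_def)
  have max_tail: "prob {\<omega> \<in> space M. (MAX k\<in>{1..n}. norm (X k \<omega>)) > c} = 1 - (1 - G c) ^ n"
    if "n \<ge> 1" for n c
    using prob_Max_norm_greater_iid[OF assms(4), of "{1..n}" Y c] that assms(2,5)
    by (simp add: G_def)
  have "\<forall>\<^sub>F n in sequentially.
      elog (prob {\<omega> \<in> space M. (MAX k\<in>{1..n}. norm (X k \<omega>)) > s * real n powr (1 / p)})
        / ereal (ln (real n))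
      = elog (1 - (1 - G (s * real n powr (1 / p))) ^ n) / ereal (ln (real n))"
    using eventually_ge_at_top[of 1] by eventually_elim (subst max_tail, simp_all)
  note limits_eq = Limsup_eq[OF this] Liminf_eq[OF this]
  have "(\<lambda>t. elog (prob {\<omega> \<in> space M. elog (norm (Y \<omega>)) > ereal t}) / ereal t)
      = (\<lambda>t. elog (G (exp t)) / ereal t)"
    by (simp add: G_def ereal_less_elog_iff)
  then have beta: "beta_bar M Y = - Limsup at_top (\<lambda>t. elog (G (exp t)) / ereal t)"
    "beta_under M Y = - Liminf at_top (\<lambda>t. elog (G (exp t)) / ereal t)"
    by (simp_all add: beta_bar_def beta_under_def)
  have "- (- A - ereal p) / ereal p = 1 + ereal (1 / p) * A" for A
    using \<open>p > 0\<close> by (cases A) (auto simp: field_simps)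
  then show ?thesis
    unfolding limits_eq beta
    using log_one_minus_power_tail_limsup_liminf[where G = G, OF \<open>p > 0\<close> \<open>s > 0\<close> G_antitone G_bounds]
    by simp
qed

end
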